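(* Let $\mathcal{E}$ be an information exchange that does not transmit information about actions and records decision information, and let $\mathcal{F}$ be a failure model that acts independently on message and action memory and whose state failures do not perturb the action memory. Let $P$ be a decision protocol implementing the knowledge-based program $\mathbf{P}(\Phi)$, with $\Phi_{i,v}=B^{\mathcal{N}}_i\,CB_{\mathcal{N}}\,\exists v$, with respect to $\mathcal{E}$ and $\mathcal{F}$. Then $P$ is an optimum SBA protocol with respect to $\mathcal{E}$ and $\mathcal{F}$.
   Context: Agents $\mathrm{Agt}=\{1,\dots,n\}$; $V$ a totally ordered set of decision values; actions $A_i=\{\mathtt{noop}\}\cup\{\mathtt{decide}_i(v):v\in V\}$. An information exchange $\mathcal{E}$ gives each agent $i$ a tuple $(L_i,I_i,M_i,\mu_i,\delta_i)$: local states $L_i$, initial states $I_i$, messages $M_i\ni\bot$, $\mu_i:L_i\times A_i\to(\mathrm{Agt}\to M_i)$, $\delta_i:L_i\times A_i\times\prod_jM_j\to L_i$; information exchanges are synchronous: local states encode the initial preference $\mathit{init}_i\in V$ and a clock $\mathit{time}_i$, $\delta_i$ preserves $\mathit{init}_i$ and increments $\mathit{time}_i$, and state failures never change $\mathit{time}_i$. $\mathcal{E}$ does not transmit information about actions if for each $i$ there are sets $S_i,D_i$ with $L_i=S_i\times D_i$ and functions $\mu'_i$ on $S_i$, $\delta^1_i:S_i\times\prod_jM_j\to S_i$, $\delta^2_i:D_i\times A_i\to D_i$ with $\mu_i((s,d),a)=\mu'_i(s)$ and $\delta_i((s,d),a,m)=(\delta^1_i(s,m),\delta^2_i(d,a))$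 ($s$: message memory, $d$: action memory). It records decision information if each $D_i$ is a disjoint union $D^1_i\cup D^2_i$ with $I_i\subseteq S_i\times D^1_i$, $\delta^2_i(d,\mathtt{noop})\in D^1_i$ and $\delta^2_i(d,\mathtt{decide}_i(v))\in D^2_i$ for $d\in D^1_i$, and $\delta^2_i(d,a)\in D^2_i$ for $d\in D^2_i$. A decision protocol is $P=(P_i:L_i\to A_i)_i$. A failure model $\mathcal{F}=(L^*_e,I_e,\delta_e,\mathit{Adv})$ has environment states, nonempty initial ones, update $\delta_e$, and adversaries $(\Delta^t,\Delta^r,\Delta^s)$, $\Delta^t,\Delta^r:\mathbb{N}\times\mathrm{Agt}\times\mathrm{Agt}\times\bigcup_iM_i\to\bigcup_iM_i$, $\Delta^s_i:\mathbb{N}\times L_i\to L_i$. It acts independently on message and action memory if for every adversary and agent $i$ there are $\Delta^s_1:\mathbb{N}\times S_i\to S_i$, $\Delta^s_2:\mathbb{N}\times D_i\to D_i$ with $\Delta^s_i(k,(s,d))=(\Delta^s_1(k,s),\Delta^s_2(k,d))$; its state failures do not perturb the action memory if moreover always $\Delta^s_2(k,d)=d$. Runs $r$ of $\mathcal{I}_{P,\mathcal{E},\mathcal{F}}$: $r(0)=((s_e,\alpha),s_1,\dots,s_n)$ with $s_e\in I_e,\alpha\in\mathit{Adv},s_i\in I_i$; from $r(k)=((s_e,\alpha),s_1,\dots,s_n)$, $r(k+1)=((\delta_e(s_e,(a_1,\dots,a_n)),\alpha),s'_1,\dots,s'_n)$ with $a_i=P_i(s_i)$ (action of $i$ at time $k$),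 $m_{i,j}=\mu_i(s_i,a_i)(j)$, $m'_{i,j}=\Delta^r(k,i,j,\Delta^t(k,i,j,m_{i,j}))$, $s^*_j=\delta_j(s_j,a_j,(m'_{1,j},\dots,m'_{n,j}))$, $s'_j=\Delta^s_j(k,s^*_j)$. Runs of different systems correspond if they have the same initial global state. An agent has a fault in a round if its sent messages are altered by $\Delta^t$, its received messages altered by $\Delta^r$, or its updated state altered by $\Delta^s$; $\mathcal{N}(r,m)$ = agents with no fault in any round of $r$. $(r,m)\sim_i(r',m')$ iff $r_i(m)=r'_i(m')$; $K_i\phi$ holds iff $\phi$ holds at all $\sim_i$-related points; $B^{\mathcal{N}}_i\phi:=K_i(i\in\mathcal{N}\Rightarrow\phi)$; $E^B_{\mathcal{N}}\phi:=\bigwedge_{i\in\mathcal{N}}B^{\mathcal{N}}_i\phi$; $CB_{\mathcal{N}}\phi:=\bigwedge_{k\ge1}(E^B_{\mathcal{N}})^k\phi$; $\exists v$ holds at $(r,m)$ iff some agent's initial preference in $r$ is $v$. Knowledge-based program $\mathbf{P}(\Phi)$: agent $i$ does $\mathtt{noop}$ until some $v$ satisfies $\Phi_{i,v}$, then performs $\mathtt{decide}_i(v)$ for the least such $v$, then $\mathtt{noop}$ forever; $P$ implements it w.r.t. $\mathcal{E},\mathcal{F}$ if at every point $(r,m)$ of $\mathcal{I}_{P,\mathcal{E},\mathcal{F}}$ and every agent $i$, $P_i(r_i(m))$ is the prescribed action with $\Phi_{i,v}$ evaluated in $\mathcal{I}_{P,\mathcal{E},\mathcal{F}}$. $P$ is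 an SBA protocol w.r.t. $\mathcal{E},\mathcal{F}$ if in every run: each agent performs a $\mathtt{decide}$ action at most once; if $i\in\mathcal{N}(r,m)$ performs $\mathtt{decide}_i(v)$ at time $m$ then every $j\in\mathcal{N}(r,m)$ performs $\mathtt{decide}_j(v)$ at time $m$; and then some agent has initial preference $v$. $P_1\le_{\mathcal{E},\mathcal{F}}P_2$ iff for every run $r_1$ of $\mathcal{I}_{P_1,\mathcal{E},\mathcal{F}}$ and agent $i$, if $i$ decides at time $m$ in $r_1$ then in the corresponding run of $\mathcal{I}_{P_2,\mathcal{E},\mathcal{F}}$ agent $i$ does not decide at any time earlier than $m$. An SBA protocol $P$ is an optimum w.r.t. $\mathcal{E},\mathcal{F}$ if $P\le_{\mathcal{E},\mathcal{F}}P'$ for every SBA protocol $P'$ w.r.t. $\mathcal{E},\mathcal{F}$. *)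

theory Defs
  imports Main
begin

text \<open>Actions of agent i: noop, or decide_i(v). The agent index of decide_i(v) is
  implicit (it is the agent performing the action).\<close>
datatype 'v act = Noop | Decide 'v

text \<open>Agents are the elements of a finite type 'a; values form a linearly ordered type 'v;
  local states have type 'l, messages type 'msg. Per-agent carriers are sets.\<close>
record ('a, 'v, 'l, 'msg) info_exchange =
  lstates :: "'a \<Rightarrow> 'l set"
  istates :: "'a \<Rightarrow> 'l set"
  msgs    :: "'a \<Rightarrow> 'msg set"
  bot     :: "'msg"
  mu      :: "'a \<Rightarrow> 'l \<Rightarrow> 'v act \<Rightarrow> 'a \<Rightarrow> 'msg"
  delta   :: "'a \<Rightarrow> 'l \<Rightarrow> 'v act \<Rightarrow> ('a \<Rightarrow> 'msg) \<Rightarrow> 'l"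
  init    :: "'a \<Rightarrow> 'l \<Rightarrow> 'v"
  time    :: "'a \<Rightarrow> 'l \<Rightarrow> nat"

definition allmsgs :: "('a, 'v, 'l, 'msg, 'z) info_exchange_scheme \<Rightarrow> 'msg set" where
  "allmsgs E = (\<Union>i. msgs E i)"

definition info_exchange :: "('a, 'v, 'l, 'msg, 'z) info_exchange_scheme \<Rightarrow> bool" where
  "info_exchange E \<longleftrightarrow>
     (\<forall>i. istates E i \<subseteq> lstates E i) \<and>
     (\<forall>i. bot E \<in> msgs E i) \<and>
     (\<forall>i s a j. s \<in> lstates E i \<longrightarrow> mu E i s a j \<in> msgs E i) \<and>
     (\<forall>i s a m. s \<in> lstates E i \<longrightarrow> (\<forall>j. m j \<in> allmsgs E) \<longrightarrow>
        delta E i s a m \<in> lstates E i \<and>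
        init E i (delta E i s a m) = init E i s \<and>
        time E i (delta E i s a m) = Suc (time E i s)) \<and>
     (\<forall>i s. s \<in> istates E i \<longrightarrow> time E i s = 0)"

record ('a, 'l, 'msg) adversary =
  dt :: "nat \<Rightarrow> 'a \<Rightarrow> 'a \<Rightarrow> 'msg \<Rightarrow> 'msg"
  dr :: "nat \<Rightarrow> 'a \<Rightarrow> 'a \<Rightarrow> 'msg \<Rightarrow> 'msg"
  ds :: "'a \<Rightarrow> nat \<Rightarrow> 'l \<Rightarrow> 'l"

record ('a, 'v, 'l, 'msg, 'e) failure_model =
  env_states :: "'e set"
  env_init   :: "'e set"
  env_delta  :: "'e \<Rightarrow> ('a \<Rightarrow> 'v act) \<Rightarrow> 'e"
  advs       :: "('a, 'l, 'msg) adversary set"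

definition failure_model ::
  "('a, 'v, 'l, 'msg, 'z) info_exchange_scheme \<Rightarrow> ('a, 'v, 'l, 'msg, 'e, 'y) failure_model_scheme \<Rightarrow> bool" where
  "failure_model E F \<longleftrightarrow>
     env_init F \<noteq> {} \<and> env_init F \<subseteq> env_states F \<and>
     (\<forall>se acts. se \<in> env_states F \<longrightarrow> env_delta F se acts \<in> env_states F) \<and>
     (\<forall>\<alpha>\<in>advs F.
        (\<forall>k i j m. m \<in> allmsgs E \<longrightarrow> dt \<alpha> k i j m \<in> allmsgs E) \<and>
        (\<forall>k i j m. m \<in> allmsgs E \<longrightarrow> dr \<alpha> k i j m \<in> allmsgs E) \<and>
        (\<forall>i k s. s \<in> lstates E i \<longrightarrow>
            ds \<alpha> i k s \<in> lstates E i \<and> time E i (ds \<alpha> i k s) = time E i s))"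

definition no_action_info ::
  "('a, 'v, 's \<times> 'd, 'msg, 'z) info_exchange_scheme \<Rightarrow> ('a \<Rightarrow> 's set) \<Rightarrow> ('a \<Rightarrow> 'd set)
   \<Rightarrow> ('a \<Rightarrow> 's \<Rightarrow> 'a \<Rightarrow> 'msg) \<Rightarrow> ('a \<Rightarrow> 's \<Rightarrow> ('a \<Rightarrow> 'msg) \<Rightarrow> 's) \<Rightarrow> ('a \<Rightarrow> 'd \<Rightarrow> 'v act \<Rightarrow> 'd) \<Rightarrow> bool" where
  "no_action_info E S D mu' delta1 delta2 \<longleftrightarrow>
     (\<forall>i. lstates E i = S i \<times> D i \<and>
        (\<forall>s\<in>S i. \<forall>m. (\<forall>j. m j \<in> allmsgs E) \<longrightarrow> delta1 i s m \<in> S i) \<and>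
        (\<forall>d\<in>D i. \<forall>a. delta2 i d a \<in> D i) \<and>
        (\<forall>s\<in>S i. \<forall>d\<in>D i. \<forall>a. mu E i (s, d) a = mu' i s) \<and>
        (\<forall>s\<in>S i. \<forall>d\<in>D i. \<forall>a m. (\<forall>j. m j \<in> allmsgs E) \<longrightarrow>
            delta E i (s, d) a m = (delta1 i s m, delta2 i d a)))"

definition records_decision_info ::
  "('a, 'v, 's \<times> 'd, 'msg, 'z) info_exchange_scheme \<Rightarrow> ('a \<Rightarrow> 's set) \<Rightarrow> ('a \<Rightarrow> 'd set)
   \<Rightarrow> ('a \<Rightarrow> 'd \<Rightarrow> 'v act \<Rightarrow> 'd) \<Rightarrow> ('a \<Rightarrow> 'd set) \<Rightarrow> ('a \<Rightarrow> 'd set) \<Rightarrow> bool" where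
  "records_decision_info E S D delta2 D1 D2 \<longleftrightarrow>
     (\<forall>i. D i = D1 i \<union> D2 i \<and> D1 i \<inter> D2 i = {} \<and>
        istates E i \<subseteq> S i \<times> D1 i \<and>
        (\<forall>d\<in>D1 i. delta2 i d Noop \<in> D1 i \<and> (\<forall>v. delta2 i d (Decide v) \<in> D2 i)) \<and>
        (\<forall>d\<in>D2 i. \<forall>a. delta2 i d a \<in> D2 i))"

definition acts_independently ::
  "('a \<Rightarrow> 's set) \<Rightarrow> ('a \<Rightarrow> 'd set) \<Rightarrow> ('a, 'v, 's \<times> 'd, 'msg, 'e, 'y) failure_model_scheme \<Rightarrow> bool" where
  "acts_independently S D F \<longleftrightarrow>
     (\<forall>\<alpha>\<in>advs F. \<forall>i. \<exists>Ds1 Ds2.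
        \<forall>k. \<forall>s\<in>S i. \<forall>d\<in>D i. ds \<alpha> i k (s, d) = (Ds1 k s, Ds2 k d))"

definition no_action_memory_perturbation ::
  "('a \<Rightarrow> 's set) \<Rightarrow> ('a \<Rightarrow> 'd set) \<Rightarrow> ('a, 'v, 's \<times> 'd, 'msg, 'e, 'y) failure_model_scheme \<Rightarrow> bool" where
  "no_action_memory_perturbation S D F \<longleftrightarrow>
     (\<forall>\<alpha>\<in>advs F. \<forall>i. \<exists>Ds1 Ds2.
        (\<forall>k. \<forall>s\<in>S i. \<forall>d\<in>D i. ds \<alpha> i k (s, d) = (Ds1 k s, Ds2 k d)) \<and>
        (\<forall>k. \<forall>d\<in>D i. Ds2 k d = d))"

type_synonym ('a, 'v, 'l) protocol = "'a \<Rightarrow> 'l \<Rightarrow> 'v act"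

type_synonym ('a, 'l, 'msg, 'e) gstate = "('e \<times> ('a, 'l, 'msg) adversary) \<times> ('a \<Rightarrow> 'l)"

definition gstep ::
  "('a, 'v, 'l) protocol \<Rightarrow> ('a, 'v, 'l, 'msg, 'z) info_exchange_scheme
   \<Rightarrow> ('a, 'v, 'l, 'msg, 'e, 'y) failure_model_scheme \<Rightarrow> nat
   \<Rightarrow> ('a, 'l, 'msg, 'e) gstate \<Rightarrow> ('a, 'l, 'msg, 'e) gstate" where
  "gstep P E F k g =
     (let se = fst (fst g); \<alpha> = snd (fst g); ls = snd g;
          acts = (\<lambda>i. P i (ls i));
          recv = (\<lambda>i j. dr \<alpha> k i j (dt \<alpha> k i j (mu E i (ls i) (acts i) j)));
          sstar = (\<lambda>j. delta E j (ls j) (acts j) (\<lambda>i. recv i j))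
      in ((env_delta F se acts, \<alpha>), (\<lambda>j. ds \<alpha> j k (sstar j))))"

primrec run ::
  "('a, 'v, 'l) protocol \<Rightarrow> ('a, 'v, 'l, 'msg, 'z) info_exchange_scheme
   \<Rightarrow> ('a, 'v, 'l, 'msg, 'e, 'y) failure_model_scheme
   \<Rightarrow> ('a, 'l, 'msg, 'e) gstate \<Rightarrow> nat \<Rightarrow> ('a, 'l, 'msg, 'e) gstate" where
  "run P E F g0 0 = g0"
| "run P E F g0 (Suc k) = gstep P E F k (run P E F g0 k)"

text \<open>Initial global states; a run is identified by its initial global state
  (runs of different systems correspond iff they have the same initial state).\<close>
definition inits ::
  "('a, 'v, 'l, 'msg, 'z) info_exchange_scheme \<Rightarrow> ('a, 'v, 'l, 'msg, 'e, 'y) failure_model_scheme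
   \<Rightarrow> ('a, 'l, 'msg, 'e) gstate set" where
  "inits E F = {g. fst (fst g) \<in> env_init F \<and> snd (fst g) \<in> advs F \<and> (\<forall>i. snd g i \<in> istates E i)}"

definition loc where
  "loc P E F g0 i m = snd (run P E F g0 m) i"

definition action where
  "action P E F g0 i m = P i (loc P E F g0 i m)"

definition adv_of :: "('a, 'l, 'msg, 'e) gstate \<Rightarrow> ('a, 'l, 'msg) adversary" where
  "adv_of g0 = snd (fst g0)"

text \<open>Messages sent from i to j in round k (from time k to k+1).\<close>
definition sent where
  "sent P E F g0 k i j = mu E i (loc P E F g0 i k) (action P E F g0 i k) j"

definition has_fault where
  "has_fault P E F g0 i k \<longleftrightarrow>
     (let \<alpha> = adv_of g0;
          tr = (\<lambda>a b. dt \<alpha> k a b (sent P E F g0 k a b));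
          sstar = delta E i (loc P E F g0 i k) (action P E F g0 i k) (\<lambda>j. dr \<alpha> k j i (tr j i))
      in (\<exists>j. tr i j \<noteq> sent P E F g0 k i j) \<or>
         (\<exists>j. dr \<alpha> k j i (tr j i) \<noteq> tr j i) \<or>
         ds \<alpha> i k sstar \<noteq> sstar)"

text \<open>N(r,m): agents with no fault in any round of r (independent of m).\<close>
definition nonfaulty where
  "nonfaulty P E F g0 = {i. \<forall>k. \<not> has_fault P E F g0 i k}"

type_synonym ('a, 'l, 'msg, 'e) formula = "('a, 'l, 'msg, 'e) gstate \<Rightarrow> nat \<Rightarrow> bool"

definition Kn where
  "Kn P E F i \<phi> g m \<longleftrightarrow>
     (\<forall>g'\<in>inits E F. \<forall>m'. loc P E F g' i m' = loc P E F g i m \<longrightarrow> \<phi> g' m')"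

definition BN where
  "BN P E F i \<phi> = Kn P E F i (\<lambda>g m. i \<in> nonfaulty P E F g \<longrightarrow> \<phi> g m)"

definition EB where
  "EB P E F \<phi> g m \<longleftrightarrow> (\<forall>i\<in>nonfaulty P E F g. BN P E F i \<phi> g m)"

definition CB where
  "CB P E F \<phi> g m \<longleftrightarrow> (\<forall>k\<ge>1. (EB P E F ^^ k) \<phi> g m)"

definition exists_val where
  "exists_val E v g m \<longleftrightarrow> (\<exists>j. init E j (snd g j) = v)"

definition Phi_CB where
  "Phi_CB E F P i v = BN P E F i (CB P E F (exists_val E v))"

definition decided_before where
  "decided_before P E F g i m \<longleftrightarrow> (\<exists>k<m. \<exists>v. action P E F g i k = Decide v)"

definition prescribed ::
  "('a, 'v::linorder, 'l) protocol \<Rightarrow> ('a, 'v, 'l, 'msg, 'z) info_exchange_scheme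
   \<Rightarrow> ('a, 'v, 'l, 'msg, 'e, 'y) failure_model_scheme
   \<Rightarrow> ('a \<Rightarrow> 'v \<Rightarrow> ('a, 'l, 'msg, 'e) formula)
   \<Rightarrow> ('a, 'l, 'msg, 'e) gstate \<Rightarrow> 'a \<Rightarrow> nat \<Rightarrow> 'v act" where
  "prescribed P E F \<Phi> g i m =
     (if decided_before P E F g i m then Noop
      else if \<exists>v. \<Phi> i v g m then Decide (LEAST v. \<Phi> i v g m) else Noop)"

text \<open>Phi is given as a function of the protocol, since it is evaluated in I_{P,E,F}.\<close>
definition implements where
  "implements E F \<Phi> P \<longleftrightarrow>
     (\<forall>g\<in>inits E F. \<forall>m i. action P E F g i m = prescribed P E F (\<Phi> P) g i m)"

definition SBA_protocol where
  "SBA_protocol E F P \<longleftrightarrow>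
     (\<forall>g\<in>inits E F.
        (\<forall>i m m' v v'. action P E F g i m = Decide v \<longrightarrow> action P E F g i m' = Decide v' \<longrightarrow> m = m') \<and>
        (\<forall>i m v. i \<in> nonfaulty P E F g \<longrightarrow> action P E F g i m = Decide v \<longrightarrow>
            (\<forall>j\<in>nonfaulty P E F g. action P E F g j m = Decide v) \<and>
            (\<exists>j. init E j (snd g j) = v)))"

definition proto_le where
  "proto_le E F P1 P2 \<longleftrightarrow>
     (\<forall>g\<in>inits E F. \<forall>i m v. action P1 E F g i m = Decide v \<longrightarrow>
        \<not> (\<exists>m'<m. \<exists>v'. action P2 E F g i m' = Decide v'))"

definition optimum_SBA where
  "optimum_SBA E F P \<longleftrightarrow> SBA_protocol E F P \<and> (\<forall>P'. SBA_protocol E F P' \<longrightarrow> proto_le E F P P')"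

end

theory Submission
  imports Defs
begin

(* Common belief among the nonfaulty agents is itself believed by each of them, so all nonfaulty
   agents satisfy B_i CB (exists v) at the same time and for the same v: this makes P an SBA
   protocol.
   For optimality: since messages carry no information about actions and failures leave the
   action memory alone, an agent's message memory evolves independently of the protocol, and its
   action memory only records whether it has decided. Hence, as long as an agent has not decided,
   its local state is the same under every protocol, and so is the set of faulty agents.
   Suppose an SBA protocol Q makes agent i decide v at a time m at which P has not yet decided,
   while Q never decided earlier than P before m. The property "at time m every nonfaulty agent
   decides v under Q and has not yet decided under P" is then believed by every nonfaulty agent
   wherever it holds, and it implies that v is some initial preference. By the induction rule for
   common belief, i believes CB (exists v) at time m, so P decides at m as well. *)

definition received ::
  "('a, 'v, 'l) protocol \<Rightarrow> ('a, 'v, 'l, 'msg, 'z) info_exchange_scheme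
   \<Rightarrow> ('a, 'v, 'l, 'msg, 'e, 'y) failure_model_scheme \<Rightarrow> ('a, 'l, 'msg, 'e) gstate
   \<Rightarrow> nat \<Rightarrow> 'a \<Rightarrow> 'a \<Rightarrow> 'msg" where
  "received P E F g k j = (\<lambda>i. dr (adv_of g) k i j (dt (adv_of g) k i j (sent P E F g k i j)))"

lemma adv_of_run: "snd (fst (run P E F g m)) = adv_of g"
  by (induction m) (simp_all add: gstep_def Let_def adv_of_def)

lemma loc_0: "loc P E F g i 0 = snd g i"
  by (simp add: loc_def)

lemma loc_Suc:
  "loc P E F g j (Suc k) =
     ds (adv_of g) j k (delta E j (loc P E F g j k) (action P E F g j k) (received P E F g k j))"
  by (simp add: loc_def gstep_def Let_def adv_of_run action_def sent_def received_def)

lemma adv_of_inits: "g \<in> inits E F \<Longrightarrow> adv_of g \<in> advs F"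
  by (simp add: inits_def adv_of_def)

lemma decided_before_0: "\<not> decided_before P E F g i 0"
  by (simp add: decided_before_def)

lemma decided_before_Suc:
  "decided_before P E F g i (Suc m) \<longleftrightarrow>
     decided_before P E F g i m \<or> (\<exists>v. action P E F g i m = Decide v)"
  by (auto simp: decided_before_def less_Suc_eq)

lemma has_fault_iff:
  "has_fault P E F g i k \<longleftrightarrow>
     (\<exists>j. dt (adv_of g) k i j (sent P E F g k i j) \<noteq> sent P E F g k i j) \<or>
     (\<exists>j. received P E F g k i j \<noteq> dt (adv_of g) k j i (sent P E F g k j i)) \<or>
     (let \<sigma> = delta E i (loc P E F g i k) (action P E F g i k) (received P E F g k i)
      in ds (adv_of g) i k \<sigma> \<noteq> \<sigma>)"
  by (simp add: has_fault_def received_def Let_def)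

lemma info_exchange_mu_in:
  assumes "info_exchange E" "l \<in> lstates E i"
  shows "mu E i l a j \<in> allmsgs E"
proof -
  have "mu E i l a j \<in> msgs E i"
    using assms unfolding info_exchange_def by simp
  then show ?thesis
    unfolding allmsgs_def by blast
qed

lemma info_exchange_delta_in:
  "info_exchange E \<Longrightarrow> l \<in> lstates E i \<Longrightarrow> \<forall>j. m j \<in> allmsgs E \<Longrightarrow>
     delta E i l a m \<in> lstates E i \<and> time E i (delta E i l a m) = Suc (time E i l)"
  unfolding info_exchange_def by simp

lemma info_exchange_istates:
  "info_exchange E \<Longrightarrow> l \<in> istates E i \<Longrightarrow> l \<in> lstates E i \<and> time E i l = 0"
  unfolding info_exchange_def by auto

lemma failure_model_transmission_in:
  "failure_model E F \<Longrightarrow> \<alpha> \<in> advs F \<Longrightarrow> m \<in> allmsgs E \<Longrightarrow>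
     dr \<alpha> k i j (dt \<alpha> k i j m) \<in> allmsgs E"
  unfolding failure_model_def by simp

lemma failure_model_ds_in:
  "failure_model E F \<Longrightarrow> \<alpha> \<in> advs F \<Longrightarrow> l \<in> lstates E i \<Longrightarrow>
     ds \<alpha> i k l \<in> lstates E i \<and> time E i (ds \<alpha> i k l) = time E i l"
  unfolding failure_model_def by simp

lemma loc_in_lstates:
  assumes "info_exchange E" "failure_model E F" "g \<in> inits E F"
  shows "loc P E F g i m \<in> lstates E i \<and> time E i (loc P E F g i m) = m"
proof (induction m arbitrary: i)
  case 0
  then show ?case
    using assms(3) info_exchange_istates[OF assms(1)] unfolding inits_def loc_0 by blast
next
  case (Suc k)
  have "\<forall>j. received P E F g k i j \<in> allmsgs E"
    using Suc failure_model_transmission_in[OF assms(2) adv_of_inits[OF assms(3)]]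
      info_exchange_mu_in[OF assms(1)]
    unfolding received_def sent_def by blast
  then show ?case
    using Suc info_exchange_delta_in[OF assms(1)]
      failure_model_ds_in[OF assms(2) adv_of_inits[OF assms(3)]]
    unfolding loc_Suc by simp
qed

section \<open>Belief and common belief\<close>

lemma BN_mono:
  assumes "BN P E F i \<phi> g m"
    and "\<And>g' m'. g' \<in> inits E F \<Longrightarrow> i \<in> nonfaulty P E F g' \<Longrightarrow> \<phi> g' m' \<Longrightarrow> \<psi> g' m'"
  shows "BN P E F i \<psi> g m"
  using assms unfolding BN_def Kn_def by blast

lemma BN_veridical:
  "BN P E F i \<phi> g m \<Longrightarrow> g \<in> inits E F \<Longrightarrow> i \<in> nonfaulty P E F g \<Longrightarrow> \<phi> g m"
  unfolding BN_def Kn_def by blast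

lemma EB_mono:
  assumes "EB P E F \<phi> g m" and "\<And>g' m'. g' \<in> inits E F \<Longrightarrow> \<phi> g' m' \<Longrightarrow> \<psi> g' m'"
  shows "EB P E F \<psi> g m"
  using assms BN_mono unfolding EB_def by metis

lemma CB_induct:
  assumes step: "\<And>g m. g \<in> inits E F \<Longrightarrow> \<psi> g m \<Longrightarrow> EB P E F (\<lambda>g m. \<psi> g m \<and> \<phi> g m) g m"
    and "g \<in> inits E F" and "\<psi> g m"
  shows "CB P E F \<phi> g m"
proof -
  have iterate: "(EB P E F ^^ Suc n) \<phi> g m" if "g \<in> inits E F" "\<psi> g m" for n g m
    using that
  proof (induction n arbitrary: g m)
    case 0
    have "EB P E F \<phi> g m"
      by (rule EB_mono[OF step[OF 0]]) simp
    then show ?case by simp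
  next
    case (Suc n)
    have "EB P E F ((EB P E F ^^ Suc n) \<phi>) g m"
      by (rule EB_mono[OF step[OF Suc.prems]]) (use Suc.IH in blast)
    then show ?case by simp
  qed
  show ?thesis
    unfolding CB_def
  proof (intro allI impI)
    fix k :: nat
    assume "k \<ge> 1"
    then obtain n where "k = Suc n"
      by (cases k) auto
    then show "(EB P E F ^^ k) \<phi> g m"
      using iterate[OF assms(2,3), of n] by simp
  qed
qed

lemma CB_imp_BN_CB:
  assumes "CB P E F \<phi> g m" and "j \<in> nonfaulty P E F g"
  shows "BN P E F j (CB P E F \<phi>) g m"
  unfolding BN_def Kn_def
proof (intro ballI allI impI)
  fix g' m'
  assume g': "g' \<in> inits E F" and same: "loc P E F g' j m' = loc P E F g j m"
    and j': "j \<in> nonfaulty P E F g'"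
  show "CB P E F \<phi> g' m'" unfolding CB_def
  proof (intro allI impI)
    fix k :: nat
    have "EB P E F ((EB P E F ^^ k) \<phi>) g m"
      using assms(1) unfolding CB_def by (metis funpow.simps(2) le_add1 o_apply plus_1_eq_Suc)
    then have "BN P E F j ((EB P E F ^^ k) \<phi>) g m"
      using assms(2) unfolding EB_def by blast
    then show "(EB P E F ^^ k) \<phi> g' m'"
      using g' same j' unfolding BN_def Kn_def by blast
  qed
qed

lemma Phi_CB_nonfaulty_agree:
  assumes "Phi_CB E F P i v g m" "g \<in> inits E F"
    and "i \<in> nonfaulty P E F g" "j \<in> nonfaulty P E F g"
  shows "Phi_CB E F P j v g m"
proof -
  have "CB P E F (exists_val E v) g m"
    using BN_veridical[OF assms(1)[unfolded Phi_CB_def] assms(2,3)] .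
  then show ?thesis
    unfolding Phi_CB_def by (rule CB_imp_BN_CB[OF _ assms(4)])
qed

lemma Phi_CB_imp_init:
  assumes "Phi_CB E F P i v g m" "g \<in> inits E F" "i \<in> nonfaulty P E F g"
  shows "\<exists>j. init E j (snd g j) = v"
proof -
  have "CB P E F (exists_val E v) g m"
    using BN_veridical[OF assms(1)[unfolded Phi_CB_def] assms(2,3)] .
  then have "(EB P E F ^^ 1) (exists_val E v) g m"
    unfolding CB_def by blast
  then have "EB P E F (exists_val E v) g m"
    by simp
  then show ?thesis
    using BN_veridical[of P E F i "exists_val E v"] assms(2,3) unfolding EB_def exists_val_def by blast
qed

section \<open>Implementations of the knowledge-based program\<close>

lemma implements_DecideD:
  assumes "implements E F \<Phi> P" "g \<in> inits E F" "action P E F g i m = Decide v"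
  shows "\<not> decided_before P E F g i m \<and> (\<exists>w. \<Phi> P i w g m) \<and> v = (LEAST w. \<Phi> P i w g m)"
  using assms unfolding implements_def prescribed_def by (auto split: if_splits)

lemma implements_decides:
  assumes "implements E F \<Phi> P" "g \<in> inits E F"
    and "\<not> decided_before P E F g i m" "\<Phi> P i w g m"
  shows "\<exists>v. action P E F g i m = Decide v"
  using assms unfolding implements_def prescribed_def by auto

lemma implements_decides_once:
  assumes "implements E F \<Phi> P" "g \<in> inits E F"
    and "action P E F g i m = Decide v" "action P E F g i m' = Decide v'"
  shows "m = m'"
proof (rule linorder_cases[of m m'])
  assume "m < m'"
  then have "decided_before P E F g i m'"
    using assms(3) unfolding decided_before_def by blast
  then show ?thesis
    using implements_DecideD[OF assms(1,2,4)] by blast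
next
  assume "m' < m"
  then have "decided_before P E F g i m"
    using assms(4) unfolding decided_before_def by blast
  then show ?thesis
    using implements_DecideD[OF assms(1,2,3)] by blast
qed

lemma implements_Phi_CB_agree:
  assumes impl: "implements E F (\<lambda>P'. Phi_CB E F P') P" and g: "g \<in> inits E F"
    and i: "i \<in> nonfaulty P E F g" and j: "j \<in> nonfaulty P E F g"
  shows "action P E F g i m = Decide v \<Longrightarrow> action P E F g j m = Decide v"
  using i j
proof (induction m arbitrary: i j v rule: less_induct)
  case (less m)
  have i_first: "\<not> decided_before P E F g i m"
    and v: "v = (LEAST w. Phi_CB E F P i w g m)" "\<exists>w. Phi_CB E F P i w g m"
    using implements_DecideD[OF impl g less.prems(1)] by auto
  have j_first: "\<not> decided_before P E F g j m"
  proof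
    assume "decided_before P E F g j m"
    then obtain k w where "k < m" "action P E F g j k = Decide w"
      unfolding decided_before_def by blast
    then have "action P E F g i k = Decide w"
      using less.IH less.prems(2,3) by blast
    with \<open>k < m\<close> i_first show False
      unfolding decided_before_def by blast
  qed
  have "(\<lambda>w. Phi_CB E F P j w g m) = (\<lambda>w. Phi_CB E F P i w g m)"
    using Phi_CB_nonfaulty_agree[OF _ g] less.prems(2,3) by (intro ext) metis
  then show ?case
    using impl g j_first v unfolding implements_def prescribed_def by simp
qed

lemma Least_in_finite:
  fixes A :: "'a::linorder set"
  assumes "finite A" "x \<in> A"
  shows "(LEAST y. y \<in> A) \<in> A"
proof -
  have "(LEAST y. y \<in> A) = Min A"
    using Least_Min[of "\<lambda>y. y \<in> A"] assms by auto
  then show ?thesis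
    using Min_in assms by (metis empty_iff)
qed

lemma implements_Phi_CB_valid:
  fixes P :: "('a::finite, 'v::linorder, 'l) protocol"
  assumes impl: "implements E F (\<lambda>P'. Phi_CB E F P') P" and g: "g \<in> inits E F"
    and i: "i \<in> nonfaulty P E F g" and dec: "action P E F g i m = Decide v"
  shows "\<exists>j. init E j (snd g j) = v"
proof -
  let ?W = "{w. Phi_CB E F P i w g m}"
  have "?W \<subseteq> range (\<lambda>j. init E j (snd g j))"
    using Phi_CB_imp_init[OF _ g i] by blast
  then have "finite ?W"
    by (rule finite_subset) simp
  moreover obtain w where "w \<in> ?W" and "v = (LEAST w. w \<in> ?W)"
    using implements_DecideD[OF impl g dec] by auto
  ultimately have "Phi_CB E F P i v g m"
    using Least_in_finite by blast
  then show ?thesis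
    using Phi_CB_imp_init[OF _ g i] by blast
qed

lemma implements_Phi_CB_SBA:
  fixes P :: "('a::finite, 'v::linorder, 'l) protocol"
  assumes "implements E F (\<lambda>P'. Phi_CB E F P') P"
  shows "SBA_protocol E F P"
  unfolding SBA_protocol_def
  using implements_decides_once[OF assms] implements_Phi_CB_agree[OF assms]
    implements_Phi_CB_valid[OF assms] by blast

lemma SBA_protocolD:
  assumes "SBA_protocol E F P" "g \<in> inits E F" "action P E F g i m = Decide v"
  shows "\<not> decided_before P E F g i m"
    and "i \<in> nonfaulty P E F g \<Longrightarrow> j \<in> nonfaulty P E F g \<Longrightarrow> action P E F g j m = Decide v"
    and "i \<in> nonfaulty P E F g \<Longrightarrow> \<exists>j. init E j (snd g j) = v"
  using assms unfolding SBA_protocol_def decided_before_def by (metis less_irrefl)+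

section \<open>Separated message and action memory\<close>

locale separated_memory =
  fixes E :: "('a, 'v, 's \<times> 'd, 'msg) info_exchange"
    and F :: "('a, 'v, 's \<times> 'd, 'msg, 'e) failure_model"
    and S :: "'a \<Rightarrow> 's set" and D :: "'a \<Rightarrow> 'd set"
    and mu' :: "'a \<Rightarrow> 's \<Rightarrow> 'a \<Rightarrow> 'msg"
    and delta1 :: "'a \<Rightarrow> 's \<Rightarrow> ('a \<Rightarrow> 'msg) \<Rightarrow> 's"
    and delta2 :: "'a \<Rightarrow> 'd \<Rightarrow> 'v act \<Rightarrow> 'd"
    and D1 D2 :: "'a \<Rightarrow> 'd set"
  assumes info_exchange: "info_exchange E"
    and failure_model: "failure_model E F"
    and no_action_info: "no_action_info E S D mu' delta1 delta2"
    and records_decision_info: "records_decision_info E S D delta2 D1 D2"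
    and no_action_memory_perturbation: "no_action_memory_perturbation S D F"
begin

lemma lstates_eq: "lstates E i = S i \<times> D i"
  using no_action_info by (simp add: no_action_info_def)

lemma mu_eq: "s \<in> S i \<Longrightarrow> d \<in> D i \<Longrightarrow> mu E i (s, d) a = mu' i s"
  using no_action_info by (simp add: no_action_info_def)

lemma delta_eq:
  "s \<in> S i \<Longrightarrow> d \<in> D i \<Longrightarrow> \<forall>j. m j \<in> allmsgs E \<Longrightarrow>
     delta E i (s, d) a m = (delta1 i s m, delta2 i d a)"
  using no_action_info by (simp add: no_action_info_def)

lemma delta1_in: "s \<in> S i \<Longrightarrow> \<forall>j. m j \<in> allmsgs E \<Longrightarrow> delta1 i s m \<in> S i"
  using no_action_info by (simp add: no_action_info_def)

lemma delta2_in: "d \<in> D i \<Longrightarrow> delta2 i d a \<in> D i"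
  using no_action_info by (simp add: no_action_info_def)

lemma fst_ds_indep:
  assumes "\<alpha> \<in> advs F" "s \<in> S i" "d \<in> D i" "d' \<in> D i"
  shows "fst (ds \<alpha> i k (s, d)) = fst (ds \<alpha> i k (s, d'))"
proof -
  obtain Ds1 Ds2 where "\<forall>k. \<forall>s\<in>S i. \<forall>d\<in>D i. ds \<alpha> i k (s, d) = (Ds1 k s, Ds2 k d)"
    using assms(1) no_action_memory_perturbation
    unfolding no_action_memory_perturbation_def by blast
  then show ?thesis
    using assms(2-4) by simp
qed

lemma snd_ds:
  assumes "\<alpha> \<in> advs F" "s \<in> S i" "d \<in> D i"
  shows "snd (ds \<alpha> i k (s, d)) = d"
proof -
  obtain Ds1 Ds2 where "\<forall>k. \<forall>s\<in>S i. \<forall>d\<in>D i. ds \<alpha> i k (s, d) = (Ds1 k s, Ds2 k d)"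
    and "\<forall>k. \<forall>d\<in>D i. Ds2 k d = d"
    using assms(1) no_action_memory_perturbation
    unfolding no_action_memory_perturbation_def by blast
  then show ?thesis
    using assms(2,3) by simp
qed

lemma records_decision_infoD:
  shows "istates E i \<subseteq> S i \<times> D1 i" and "D1 i \<inter> D2 i = {}"
    and "d \<in> D1 i \<Longrightarrow> delta2 i d Noop \<in> D1 i"
    and "d \<in> D1 i \<Longrightarrow> delta2 i d (Decide v) \<in> D2 i"
    and "d \<in> D2 i \<Longrightarrow> delta2 i d a \<in> D2 i"
  using records_decision_info unfolding records_decision_info_def by simp_all

lemma loc_in_S_D:
  assumes "g \<in> inits E F"
  shows "fst (loc P E F g i m) \<in> S i" and "snd (loc P E F g i m) \<in> D i"
  using loc_in_lstates[OF info_exchange failure_model assms] lstates_eq by (auto simp: mem_Times_iff)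

lemma sent_eq: "g \<in> inits E F \<Longrightarrow> sent P E F g k i j = mu' i (fst (loc P E F g i k)) j"
  using loc_in_S_D mu_eq unfolding sent_def by (metis prod.collapse)

lemma received_in_allmsgs: "g \<in> inits E F \<Longrightarrow> \<forall>i. received P E F g k j i \<in> allmsgs E"
  using loc_in_lstates[OF info_exchange failure_model]
    info_exchange_mu_in[OF info_exchange]
    failure_model_transmission_in[OF failure_model adv_of_inits]
  unfolding received_def sent_def by blast

lemma delta_loc:
  assumes "g \<in> inits E F"
  shows "delta E j (loc P E F g j k) (action P E F g j k) (received P E F g k j) =
    (delta1 j (fst (loc P E F g j k)) (received P E F g k j),
     delta2 j (snd (loc P E F g j k)) (action P E F g j k))"
  using delta_eq[OF loc_in_S_D[OF assms, of P j k] received_in_allmsgs[OF assms, of P k j]]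
  by simp

lemma loc_Suc_split:
  assumes "g \<in> inits E F"
  shows "loc P E F g j (Suc k) =
    (fst (ds (adv_of g) j k (delta1 j (fst (loc P E F g j k)) (received P E F g k j),
                             delta2 j (snd (loc P E F g j k)) (action P E F g j k))),
     delta2 j (snd (loc P E F g j k)) (action P E F g j k))"
  using snd_ds[OF adv_of_inits[OF assms]
      delta1_in[OF loc_in_S_D(1)[OF assms] received_in_allmsgs[OF assms]]
      delta2_in[OF loc_in_S_D(2)[OF assms]]]
  unfolding loc_Suc delta_loc[OF assms] by (metis prod.collapse)

lemma fst_loc_protocol_indep:
  assumes g: "g \<in> inits E F"
  shows "fst (loc P E F g i m) = fst (loc P' E F g i m)"
proof (induction m arbitrary: i)
  case 0
  then show ?case by (simp add: loc_0)
next
  case (Suc k)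
  have "received P E F g k i = received P' E F g k i"
    unfolding received_def sent_eq[OF g] Suc ..
  then show ?case
    unfolding loc_Suc_split[OF g]
    using fst_ds_indep[OF adv_of_inits[OF g]
        delta1_in[OF loc_in_S_D(1)[OF g] received_in_allmsgs[OF g]]
        delta2_in[OF loc_in_S_D(2)[OF g]] delta2_in[OF loc_in_S_D(2)[OF g]]]
    by (simp add: Suc)
qed

lemma snd_loc_Suc:
  "g \<in> inits E F \<Longrightarrow>
     snd (loc P E F g i (Suc k)) = delta2 i (snd (loc P E F g i k)) (action P E F g i k)"
  using loc_Suc_split by simp

lemma undecided_action_memory:
  assumes g: "g \<in> inits E F"
  shows "\<not> decided_before P E F g i m \<Longrightarrow>
    snd (loc P E F g i m) = ((\<lambda>d. delta2 i d Noop) ^^ m) (snd (snd g i)) \<and>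
    snd (loc P E F g i m) \<in> D1 i"
proof (induction m)
  case 0
  have "snd g i \<in> S i \<times> D1 i"
    using g records_decision_infoD(1) unfolding inits_def by blast
  then show ?case by (auto simp: loc_0)
next
  case (Suc k)
  then have undecided: "\<not> decided_before P E F g i k" and Noop: "action P E F g i k = Noop"
    unfolding decided_before_Suc by (auto intro: act.exhaust)
  have "snd (loc P E F g i k) = ((\<lambda>d. delta2 i d Noop) ^^ k) (snd (snd g i))"
    and "snd (loc P E F g i k) \<in> D1 i"
    using Suc.IH[OF undecided] by auto
  then show ?case
    using records_decision_infoD(3) Noop by (simp add: snd_loc_Suc[OF g])
qed

lemma decided_action_memory:
  assumes g: "g \<in> inits E F"
  shows "decided_before P E F g i m \<Longrightarrow> snd (loc P E F g i m) \<in> D2 i"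
proof (induction m)
  case 0
  then show ?case by (simp add: decided_before_0)
next
  case (Suc k)
  show ?case
  proof (cases "decided_before P E F g i k")
    case True
    then show ?thesis
      using Suc.IH records_decision_infoD(5) by (simp add: snd_loc_Suc[OF g])
  next
    case False
    then obtain v where "action P E F g i k = Decide v"
      using Suc.prems unfolding decided_before_Suc by blast
    then show ?thesis
      using records_decision_infoD(4)[OF conjunct2[OF undecided_action_memory[OF g False]]]
      by (simp add: snd_loc_Suc[OF g])
  qed
qed

lemma decided_before_iff_action_memory:
  "g \<in> inits E F \<Longrightarrow> decided_before P E F g i m \<longleftrightarrow> snd (loc P E F g i m) \<notin> D1 i"
  using undecided_action_memory decided_action_memory records_decision_infoD(2) by blast

lemma loc_eq_if_undecided:
  assumes "g \<in> inits E F" "\<not> decided_before P E F g i m" "\<not> decided_before P' E F g i m"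
  shows "loc P E F g i m = loc P' E F g i m"
  using undecided_action_memory[OF assms(1,2)] undecided_action_memory[OF assms(1,3)]
    fst_loc_protocol_indep[OF assms(1)] by (simp add: prod_eq_iff)

lemma loc_eq_imp_undecided:
  assumes "g \<in> inits E F" "g' \<in> inits E F" "loc P E F g' i m' = loc P E F g i m"
    and "\<not> decided_before P E F g i m"
  shows "m' = m" and "\<not> decided_before P E F g' i m"
proof -
  show "m' = m"
    using loc_in_lstates[OF info_exchange failure_model] assms(1-3) by metis
  then show "\<not> decided_before P E F g' i m"
    using decided_before_iff_action_memory assms by metis
qed

lemma ds_fixes_indep:
  assumes "\<alpha> \<in> advs F" "s \<in> S i" "d \<in> D i" "d' \<in> D i"
  shows "ds \<alpha> i k (s, d) = (s, d) \<longleftrightarrow> ds \<alpha> i k (s, d') = (s, d')"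
  using fst_ds_indep[OF assms] snd_ds[OF assms(1,2,3)] snd_ds[OF assms(1,2,4)]
  by (metis prod.collapse prod.inject)

lemma has_fault_protocol_indep:
  assumes g: "g \<in> inits E F"
  shows "has_fault P E F g i k \<longleftrightarrow> has_fault P' E F g i k"
proof -
  have sent: "sent P E F g k = sent P' E F g k"
    using sent_eq[OF g] fst_loc_protocol_indep[OF g] by (intro ext) metis
  then have received: "received P E F g k i = received P' E F g k i"
    unfolding received_def by simp
  have "delta1 i (fst (loc P E F g i k)) (received P E F g k i) \<in> S i"
    using delta1_in[OF loc_in_S_D(1)[OF g] received_in_allmsgs[OF g]] .
  then have "ds (adv_of g) i k (delta E i (loc P E F g i k) (action P E F g i k) (received P E F g k i)) =
        delta E i (loc P E F g i k) (action P E F g i k) (received P E F g k i) \<longleftrightarrow>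
      ds (adv_of g) i k (delta E i (loc P' E F g i k) (action P' E F g i k) (received P' E F g k i)) =
        delta E i (loc P' E F g i k) (action P' E F g i k) (received P' E F g k i)"
    unfolding delta_loc[OF g] unfolding received fst_loc_protocol_indep[OF g, of P i k P']
    by (intro ds_fixes_indep adv_of_inits[OF g] delta2_in loc_in_S_D(2)[OF g])
  then show ?thesis
    unfolding has_fault_iff Let_def sent received by simp
qed

lemma nonfaulty_protocol_indep: "g \<in> inits E F \<Longrightarrow> nonfaulty P E F g = nonfaulty P' E F g"
  unfolding nonfaulty_def using has_fault_protocol_indep by blast

lemma SBA_decision_spreads:
  assumes P: "SBA_protocol E F P" and Q: "SBA_protocol E F Q" and g: "g \<in> inits E F"
    and j: "j \<in> nonfaulty P E F g" and j': "j' \<in> nonfaulty P E F g"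
    and Q_decides: "action Q E F g j m = Decide v"
    and P_undecided: "\<not> decided_before P E F g j m"
  shows "action Q E F g j' m = Decide v \<and> \<not> decided_before P E F g j' m"
proof
  show "action Q E F g j' m = Decide v"
    using SBA_protocolD(2)[OF Q g Q_decides] j j' nonfaulty_protocol_indep[OF g] by blast
  show "\<not> decided_before P E F g j' m"
  proof
    assume "decided_before P E F g j' m"
    then obtain k w where "k < m" "action P E F g j' k = Decide w"
      unfolding decided_before_def by blast
    then have "action P E F g j k = Decide w"
      using SBA_protocolD(2)[OF P g] j j' by blast
    with \<open>k < m\<close> P_undecided show False
      unfolding decided_before_def by blast
  qed
qed

lemma SBA_decision_transfer:
  assumes Q: "SBA_protocol E F Q" and g: "g \<in> inits E F" and g': "g' \<in> inits E F"
    and same: "loc P E F g' j m' = loc P E F g j m"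
    and Q_decides: "action Q E F g j m = Decide v"
    and P_undecided: "\<not> decided_before P E F g j m"
    and not_earlier: "\<not> decided_before P E F g' j m \<Longrightarrow> \<not> decided_before Q E F g' j m"
  shows "m' = m" and "action Q E F g' j m = Decide v" and "\<not> decided_before P E F g' j m"
proof -
  show "m' = m" and P_undecided': "\<not> decided_before P E F g' j m"
    using loc_eq_imp_undecided[OF g g' same P_undecided] by auto
  have "loc Q E F g' j m = loc Q E F g j m"
    using loc_eq_if_undecided[OF g' P_undecided' not_earlier[OF P_undecided']]
      loc_eq_if_undecided[OF g P_undecided SBA_protocolD(1)[OF Q g Q_decides]]
      same \<open>m' = m\<close> by simp
  then show "action Q E F g' j m = Decide v"
    using Q_decides unfolding action_def by simp
qed

lemma SBA_decision_imp_Phi_CB: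
  assumes P: "SBA_protocol E F P" and Q: "SBA_protocol E F Q"
    and not_earlier: "\<And>g j. g \<in> inits E F \<Longrightarrow>
      \<not> decided_before P E F g j m \<Longrightarrow> \<not> decided_before Q E F g j m"
    and g: "g \<in> inits E F" and Q_decides: "action Q E F g i m = Decide v"
    and P_undecided: "\<not> decided_before P E F g i m"
  shows "Phi_CB E F P i v g m"
proof -
  define \<psi> where "\<psi> g' m' \<longleftrightarrow> m' = m \<and> (\<forall>j \<in> nonfaulty P E F g'.
    action Q E F g' j m = Decide v \<and> \<not> decided_before P E F g' j m)" for g' m'
  have \<psi>I: "\<psi> g' m"
    if "g' \<in> inits E F" "j \<in> nonfaulty P E F g'"
      "action Q E F g' j m = Decide v" "\<not> decided_before P E F g' j m" for g' j
    using SBA_decision_spreads[OF P Q that(1,2) _ that(3,4)] unfolding \<psi>_def by blast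
  have "EB P E F (\<lambda>g m. \<psi> g m \<and> exists_val E v g m) g' m'"
    if g': "g' \<in> inits E F" and "\<psi> g' m'" for g' m'
    unfolding EB_def BN_def Kn_def
  proof (intro ballI allI impI conjI)
    fix j g'' m''
    assume j: "j \<in> nonfaulty P E F g'" and g'': "g'' \<in> inits E F"
      and same: "loc P E F g'' j m'' = loc P E F g' j m'" and j'': "j \<in> nonfaulty P E F g''"
    have "m' = m" and decided': "action Q E F g' j m = Decide v" "\<not> decided_before P E F g' j m"
      using \<open>\<psi> g' m'\<close> j unfolding \<psi>_def by auto
    then have "m'' = m" "action Q E F g'' j m = Decide v" "\<not> decided_before P E F g'' j m"
      using SBA_decision_transfer[OF Q g' g'' same[unfolded \<open>m' = m\<close>] decided' not_earlier[OF g'']]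
      by auto
    then show "\<psi> g'' m''"
      using \<psi>I[OF g'' j''] by simp
    show "exists_val E v g'' m''"
      using SBA_protocolD(3)[OF Q g'' \<open>action Q E F g'' j m = Decide v\<close>] j''
        nonfaulty_protocol_indep[OF g''] unfolding exists_val_def by blast
  qed
  then have CB: "CB P E F (exists_val E v) g' m'" if "g' \<in> inits E F" "\<psi> g' m'" for g' m'
    using CB_induct that by blast
  show ?thesis
    unfolding Phi_CB_def BN_def Kn_def
  proof (intro ballI allI impI)
    fix g' m'
    assume g': "g' \<in> inits E F" and same: "loc P E F g' i m' = loc P E F g i m"
      and i': "i \<in> nonfaulty P E F g'"
    have "m' = m" "action Q E F g' i m = Decide v" "\<not> decided_before P E F g' i m"
      using SBA_decision_transfer[OF Q g g' same Q_decides P_undecided not_earlier[OF g']] by auto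
    then show "CB P E F (exists_val E v) g' m'"
      using CB[OF g'] \<psi>I[OF g' i'] by simp
  qed
qed

lemma Phi_CB_protocol_decides_first:
  assumes P: "SBA_protocol E F P" and Q: "SBA_protocol E F Q"
    and P_decides: "\<And>g i m w. g \<in> inits E F \<Longrightarrow> \<not> decided_before P E F g i m \<Longrightarrow>
      Phi_CB E F P i w g m \<Longrightarrow> \<exists>v. action P E F g i m = Decide v"
  shows "g \<in> inits E F \<Longrightarrow> \<not> decided_before P E F g i m \<Longrightarrow> \<not> decided_before Q E F g i m"
proof (induction m arbitrary: g i)
  case 0
  then show ?case by (simp add: decided_before_0)
next
  case (Suc m)
  have P_undecided: "\<not> decided_before P E F g i m" "\<nexists>w. action P E F g i m = Decide w"
    using Suc.prems(2) unfolding decided_before_Suc by auto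
  have "\<nexists>v. action Q E F g i m = Decide v"
    using SBA_decision_imp_Phi_CB[OF P Q Suc.IH Suc.prems(1) _ P_undecided(1)]
      P_decides[OF Suc.prems(1) P_undecided(1)] P_undecided(2) by blast
  then show ?case
    using Suc.IH[OF Suc.prems(1) P_undecided(1)] unfolding decided_before_Suc by blast
qed

end

theorem theorem15:
  fixes E :: "('a::finite, 'v::linorder, 's \<times> 'd, 'msg) info_exchange"
    and F :: "('a, 'v, 's \<times> 'd, 'msg, 'e) failure_model"
    and P :: "('a, 'v, 's \<times> 'd) protocol"
    and S :: "'a \<Rightarrow> 's set" and D :: "'a \<Rightarrow> 'd set"
    and mu' :: "'a \<Rightarrow> 's \<Rightarrow> 'a \<Rightarrow> 'msg"
    and delta1 :: "'a \<Rightarrow> 's \<Rightarrow> ('a \<Rightarrow> 'msg) \<Rightarrow> 's"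
    and delta2 :: "'a \<Rightarrow> 'd \<Rightarrow> 'v act \<Rightarrow> 'd"
    and D1 D2 :: "'a \<Rightarrow> 'd set"
  assumes "info_exchange E"
    and "failure_model E F"
    and "no_action_info E S D mu' delta1 delta2"
    and "records_decision_info E S D delta2 D1 D2"
    and "acts_independently S D F"
    and "no_action_memory_perturbation S D F"
    and "implements E F (\<lambda>P'. Phi_CB E F P') P"
  shows "optimum_SBA E F P"
proof -
  \<comment> \<open>The hypothesis \<open>acts_independently\<close> is implied by \<open>no_action_memory_perturbation\<close>.\<close>
  interpret separated_memory E F S D mu' delta1 delta2 D1 D2
    using assms(1-4,6) by unfold_locales
  have P: "SBA_protocol E F P"
    using implements_Phi_CB_SBA[OF assms(7)] .
  have P_decides: "\<exists>v. action P E F g i m = Decide v"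
    if "g \<in> inits E F" "\<not> decided_before P E F g i m" "Phi_CB E F P i w g m" for g i m w
    using implements_decides[OF assms(7)] that by simp
  show ?thesis
    unfolding optimum_SBA_def proto_le_def
  proof (intro conjI P allI impI ballI notI)
    fix Q g i m v
    assume Q: "SBA_protocol E F Q" and g: "g \<in> inits E F"
      and P_dec: "action P E F g i m = Decide v"
      and Q_earlier: "\<exists>m'<m. \<exists>v'. action Q E F g i m' = Decide v'"
    have "decided_before Q E F g i m"
      using Q_earlier unfolding decided_before_def .
    then have "decided_before P E F g i m"
      using Phi_CB_protocol_decides_first[of P Q g i m] P Q P_decides g by blast
    then show False
      using implements_DecideD[OF assms(7) g P_dec] by blast
  qed
qed

end
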